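(* In the setting of the context, assume (G1), (G2), (G3). Let $M:=(2c_D^2c^2c_1^2)\vee(3cc_2)$, let $k\in\mathbb N$ with $M\le M_0^k$ and $\alpha_0^k<1/4$, put $\alpha_M:=\alpha_0^k$ and let $0<\alpha\le\alpha_M$. Then there exists $\delta_0>0$ such that for every $x\in X_0$ and $0<r<R_0(x)$, $$\mu_x^{U(x,\alpha^2r)}(U(x,r))>\delta_0.$$
   Context: $(X,\rho)$ separable metric space, $X_0\subseteq X$ open; $\mathcal M(X)$ finite Borel measures (extended to universally measurable sets), $\|\mu\|=\mu(X)$, $\varepsilon_x$ Dirac measure. For every open $U\subseteq X$ and $x\in X$ a measure $\mu_x^U\in\mathcal M(X)$ is given such that for all open $U,V$ and $x$: $\mu_x^U(U)=0$, $\|\mu_x^U\|\le1$, $\mu_x^U=\varepsilon_x$ if $x\notin U$; $y\mapsto\mu_y^U(E)$ universally measurable for Borel $E$; $\mu_x^U=\int\mu_y^U\,d\mu_x^V(y)$ if $V\subseteq U$. For closed $A$, $\varepsilon_x^A:=\mu_x^{X\setminus A}$. $\mathcal U(X_0)$: open $U$ with $\overline U\subseteq X_0$; $U(x,r)$ open ball; $R_0(x):=\sup\{r>0:\overline{U(x,r)}\subseteq X_0\}$. $G\colon X\times X\to(0,\infty]$ Borel, $G\mu(x)=\int G(x,y)d\mu(y)$, $\operatorname{cap}A:=\sup\{\|\mu\|:\mu\in\mathcal M(X),\mu(X\setminus A)=0,G\mu\le1\}$. (G1): there is $c_1\ge1$ such that for all $U\in\mathcal U(X_0)$, $x\in U$,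 $\delta>0$, closed $A\subseteq U$ there are a closed neighborhood $B\subseteq U$ of $A$ and a measure $\nu$ carried by $B$ with $\|\varepsilon_x^B\|-\delta<c_1\|\varepsilon_x^A\|$ and $\|\varepsilon_y^A\|\le G\nu(y)\le c_1\|\varepsilon_y^B\|$ for all $y$. (G2): there are a strictly decreasing continuous $g\colon[0,\infty)\to(0,\infty]$ and $c,c_D,M_0\in[1,\infty)$, $\alpha_0\in(0,1)$ with $g(r/2)\le c_Dg(r)$, $M_0g(r)\le g(\alpha_0r)$ for all $r>0$ and $c^{-1}g\circ\rho\le G\le c\,g\circ\rho$. (G3): there is $c_2\ge1$ with $\operatorname{cap}U(x,r)\ge c_2^{-1}g(r)^{-1}$ for all $x\in X_0$, $0<r<R_0(x)$. *)

theory Defs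
  imports "HOL-Analysis.Analysis" "HOL-Probability.Giry_Monad"
begin

definition fin_borel_measure :: "'a::metric_space measure \<Rightarrow> bool" where
  "fin_borel_measure \<nu> \<longleftrightarrow> sets \<nu> = sets borel \<and> finite_measure \<nu>"

definition mass :: "'a measure \<Rightarrow> real" where
  "mass \<nu> = measure \<nu> (space \<nu>)"

definition univ_measurable :: "('a::metric_space \<Rightarrow> ennreal) \<Rightarrow> bool" where
  "univ_measurable f \<longleftrightarrow>
     (\<forall>\<nu>. fin_borel_measure \<nu> \<longrightarrow> f \<in> borel_measurable (completion \<nu>))"

text \<open>Standing assumptions on the family \<open>\<mu>_x^U\<close>, given as \<open>mu U x\<close>.\<close>
definition harmonic_kernel :: "('a::metric_space set \<Rightarrow> 'a \<Rightarrow> 'a measure) \<Rightarrow> bool" where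
  "harmonic_kernel mu \<longleftrightarrow>
    (\<forall>U x. open U \<longrightarrow>
        fin_borel_measure (mu U x) \<and> emeasure (mu U x) U = 0 \<and> mass (mu U x) \<le> 1 \<and>
        (x \<notin> U \<longrightarrow> mu U x = return borel x)) \<and>
    (\<forall>U E. open U \<longrightarrow> E \<in> sets borel \<longrightarrow> univ_measurable (\<lambda>y. emeasure (mu U y) E)) \<and>
    (\<forall>U V x. open U \<longrightarrow> open V \<longrightarrow> V \<subseteq> U \<longrightarrow>
        (\<forall>E \<in> sets borel. emeasure (mu U x) E =
              (\<integral>\<^sup>+ y. emeasure (mu U y) E \<partial>completion (mu V x))))"

definition swept :: "('a set \<Rightarrow> 'a \<Rightarrow> 'a measure) \<Rightarrow> 'a set \<Rightarrow> 'a \<Rightarrow> 'a measure" where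
  "swept mu A x = mu (- A) x"

definition relcomp_opens :: "'a::metric_space set \<Rightarrow> 'a set set" where
  "relcomp_opens X0 = {U. open U \<and> closure U \<subseteq> X0}"

definition R0 :: "'a::metric_space set \<Rightarrow> 'a \<Rightarrow> ereal" where
  "R0 X0 x = (SUP r \<in> {r. r > 0 \<and> closure (ball x r) \<subseteq> X0}. ereal r)"

definition pot :: "('a \<Rightarrow> 'a \<Rightarrow> ennreal) \<Rightarrow> 'a measure \<Rightarrow> 'a \<Rightarrow> ennreal" where
  "pot G \<nu> x = (\<integral>\<^sup>+ y. G x y \<partial>\<nu>)"

definition cap :: "('a::metric_space \<Rightarrow> 'a \<Rightarrow> ennreal) \<Rightarrow> 'a set \<Rightarrow> ennreal" where
  "cap G A = (SUP \<nu> \<in> {\<nu>. fin_borel_measure \<nu> \<and> emeasure \<nu> (- A) = 0 \<and> (\<forall>x. pot G \<nu> x \<le> 1)}.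
                 emeasure \<nu> (space \<nu>))"

definition G1 :: "'a::metric_space set \<Rightarrow> ('a set \<Rightarrow> 'a \<Rightarrow> 'a measure) \<Rightarrow> ('a \<Rightarrow> 'a \<Rightarrow> ennreal) \<Rightarrow> real \<Rightarrow> bool" where
  "G1 X0 mu G c1 \<longleftrightarrow> c1 \<ge> 1 \<and>
    (\<forall>U \<in> relcomp_opens X0. \<forall>x \<in> U. \<forall>\<delta> > 0. \<forall>A. closed A \<longrightarrow> A \<subseteq> U \<longrightarrow>
      (\<exists>B \<nu>. closed B \<and> B \<subseteq> U \<and> A \<subseteq> interior B \<and>
        fin_borel_measure \<nu> \<and> emeasure \<nu> (- B) = 0 \<and>
        mass (swept mu B x) - \<delta> < c1 * mass (swept mu A x) \<and>
        (\<forall>y. ennreal (mass (swept mu A y)) \<le> pot G \<nu> y \<and>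
             pot G \<nu> y \<le> ennreal (c1 * mass (swept mu B y)))))"

definition G2 :: "('a::metric_space \<Rightarrow> 'a \<Rightarrow> ennreal) \<Rightarrow> (real \<Rightarrow> ennreal) \<Rightarrow> real \<Rightarrow> real \<Rightarrow> real \<Rightarrow> real \<Rightarrow> bool" where
  "G2 G g c cD M0 \<alpha>0 \<longleftrightarrow>
    strict_antimono_on {0..} g \<and> continuous_on {0..} g \<and> (\<forall>r \<ge> 0. g r > 0) \<and>
    c \<ge> 1 \<and> cD \<ge> 1 \<and> M0 \<ge> 1 \<and> 0 < \<alpha>0 \<and> \<alpha>0 < 1 \<and>
    (\<forall>r > 0. g (r / 2) \<le> ennreal cD * g r \<and> ennreal M0 * g r \<le> g (\<alpha>0 * r)) \<and>
    (\<forall>x y. ennreal (1 / c) * g (dist x y) \<le> G x y \<and> G x y \<le> ennreal c * g (dist x y))"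

definition G3 :: "'a::metric_space set \<Rightarrow> ('a \<Rightarrow> 'a \<Rightarrow> ennreal) \<Rightarrow> (real \<Rightarrow> ennreal) \<Rightarrow> real \<Rightarrow> bool" where
  "G3 X0 G g c2 \<longleftrightarrow> c2 \<ge> 1 \<and>
    (\<forall>x \<in> X0. \<forall>r. 0 < r \<longrightarrow> ereal r < R0 X0 x \<longrightarrow>
       cap G (ball x r) \<ge> ennreal (1 / c2) * inverse (g r))"

end

theory Submission
  imports Defs
begin

text \<open>
  Put \<open>a = \<alpha> r\<close>, \<open>b = \<alpha>\<^sup>2 r\<close> and let \<open>F\<close> be the closed annulus \<open>b \<le> d(x,y) \<le> a\<close>. Applying (G1) to \<open>F\<close>
  inside a ball \<open>U(x,\<rho>)\<close>, \<open>\<rho>\<close> slightly above \<open>a\<close>, gives a closed neighbourhood \<open>B\<close> of \<open>F\<close> and a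
  measure \<open>\<nu>\<close> on \<open>B\<close> with \<open>\<parallel>\<epsilon>_y^F\<parallel> \<le> G\<nu>(y) \<le> c\<^sub>1\<parallel>\<epsilon>_y^B\<parallel>\<close>. As \<open>G\<nu> \<ge> 1\<close> on the annulus, integrating \<open>G\<nu>\<close>
  against a capacitary measure of \<open>U(x,a)\<close> from (G3) and using the quasi-symmetry
  \<open>G(y,z) \<le> c\<^sup>2 G(z,y)\<close> shows \<open>g(a)\<parallel>\<nu>\<parallel> > 1/(2c\<^sup>2c\<^sub>2)\<close>; evaluating \<open>G\<nu>\<close> at \<open>x\<close> then bounds \<open>\<parallel>\<epsilon>_x^B\<parallel>\<close>,
  hence \<open>\<parallel>\<epsilon>_x^F\<parallel>\<close>, from below by a multiple of \<open>g(a)\<parallel>\<nu>\<parallel>\<close>. Finally \<open>\<epsilon>_x^F\<close> is \<open>\<mu>_x^{U(x,b)}\<close> followed by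
  sweeping onto \<open>F\<close>, and off \<open>U(x,r)\<close> the swept mass is at most \<open>G\<nu> \<le> c g(r/2)\<parallel>\<nu>\<parallel>\<close>, which (G2)
  and the choice of \<open>\<alpha>\<close> make small compared with \<open>g(a)\<parallel>\<nu>\<parallel>\<close>.
\<close>

section \<open>Measures on a separable metric space\<close>

lemma open_in_sets_pair_borel:
  fixes S :: "('a::metric_space \<times> 'a) set"
  assumes sep: "separable_space (euclidean :: 'a topology)" and S: "open S"
  shows "S \<in> sets (borel \<Otimes>\<^sub>M borel)"
proof -
  obtain D :: "'a set" where D: "countable D" "closure D = UNIV"
    using sep unfolding separable_space_def euclidean_closure_of by auto
  define I where "I = {(d, e, q). d \<in> D \<and> e \<in> D \<and> q \<in> \<rat> \<and> ball d q \<times> ball e q \<subseteq> S}"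
  have "countable I"
    by (rule countable_subset[of _ "D \<times> D \<times> \<rat>"]) (auto simp: I_def D countable_rat)
  moreover have S_eq: "S = (\<Union>(d, e, q)\<in>I. ball d q \<times> ball e q)"
  proof (intro equalityI subsetI)
    fix p assume "p \<in> S"
    then obtain a b A B where p: "p = (a, b)" and AB: "open A" "open B" "a \<in> A" "b \<in> B" "A \<times> B \<subseteq> S"
      using S by (metis open_prod_elim mem_Times_iff prod.collapse)
    obtain e1 e2 where "e1 > 0" "ball a e1 \<subseteq> A" "e2 > 0" "ball b e2 \<subseteq> B"
      using AB open_contains_ball_eq by metis
    then obtain e where e: "e > 0" "ball a e \<subseteq> A" "ball b e \<subseteq> B"
      by (intro that[of "min e1 e2"]) (auto simp: subset_iff)
    obtain q where q: "q \<in> \<rat>" "0 < q" "q < e/2"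
      using Rats_dense_in_real[of 0 "e/2"] e by auto
    obtain d d' where d: "d \<in> D" "dist d a < q" "d' \<in> D" "dist d' b < q"
      using closure_approachable[of _ D] D q by (metis UNIV_I)
    have "ball u q \<subseteq> ball v e" if "dist u v < q" for u v :: 'a
      unfolding subset_iff mem_ball using that q by metric
    then have "ball d q \<times> ball d' q \<subseteq> S" using d e AB by blast
    then have "(d, d', q) \<in> I" using d q by (auto simp: I_def)
    moreover have "p \<in> ball d q \<times> ball d' q" using d p by (auto simp: dist_commute)
    ultimately show "p \<in> (\<Union>(d, e, q)\<in>I. ball d q \<times> ball e q)" by blast
  qed (auto simp: I_def)
  ultimately show ?thesis
    by (subst S_eq, intro sets.countable_UN'') auto
qed

lemma borel_measurable_pair_separable:
  fixes f :: "'a::metric_space \<times> 'a \<Rightarrow> 'b::topological_space"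
  assumes sep: "separable_space (euclidean :: 'a topology)" and f: "f \<in> borel_measurable borel"
    and M: "sets M = sets borel" and N: "sets N = sets borel"
  shows "f \<in> borel_measurable (M \<Otimes>\<^sub>M N)"
proof -
  have "sets (borel :: ('a \<times> 'a) measure) \<subseteq> sets (borel \<Otimes>\<^sub>M borel)"
    unfolding sets_borel using open_in_sets_pair_borel[OF sep]
    by (intro sets.sigma_sets_subset') (auto simp: space_pair_measure)
  then have "measurable borel borel \<subseteq> measurable (M \<Otimes>\<^sub>M N) (borel :: 'b measure)"
    using sets_pair_measure_cong[OF M N] M N
    by (intro measurable_mono) (auto simp: space_pair_measure sets_eq_imp_space_eq)
  then show ?thesis using f by blast
qed

lemma fin_borel_measure_sets: "fin_borel_measure \<nu> \<Longrightarrow> sets \<nu> = sets borel"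
  unfolding fin_borel_measure_def by simp

lemma fin_borel_measure_space: "fin_borel_measure \<nu> \<Longrightarrow> space \<nu> = UNIV"
  by (metis fin_borel_measure_sets sets_eq_imp_space_eq space_borel)

lemma fin_borel_measure_emeasure: "fin_borel_measure \<nu> \<Longrightarrow> emeasure \<nu> A = ennreal (measure \<nu> A)"
  unfolding fin_borel_measure_def by (simp add: finite_measure.emeasure_eq_measure)

lemma fin_borel_measure_emeasure_UNIV: "fin_borel_measure \<nu> \<Longrightarrow> emeasure \<nu> UNIV = ennreal (mass \<nu>)"
  by (simp add: fin_borel_measure_emeasure fin_borel_measure_space mass_def)

lemma AE_in_carrier:
  assumes "fin_borel_measure \<nu>" "B \<in> sets borel" "emeasure \<nu> (- B) = 0"
  shows "AE z in \<nu>. z \<in> B"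
  using assms by (intro AE_I'[of "- B"]) (auto simp: null_sets_def fin_borel_measure_sets)

lemma measure_eq_mass_if_carried:
  assumes \<nu>: "fin_borel_measure \<nu>" and B: "B \<in> sets borel" "emeasure \<nu> (- B) = 0"
    and A: "A \<in> sets borel" "B \<subseteq> A"
  shows "measure \<nu> A = mass \<nu>"
  unfolding mass_def using AE_in_carrier[OF \<nu> B] A
  by (intro measure_eq_AE) (auto simp: fin_borel_measure_sets[OF \<nu>] fin_borel_measure_space[OF \<nu>])

lemma nn_integral_swap_separable:
  fixes h :: "'a::metric_space \<times> 'a \<Rightarrow> ennreal"
  assumes sep: "separable_space (euclidean :: 'a topology)" and h: "h \<in> borel_measurable borel"
    and L: "fin_borel_measure L" and N: "fin_borel_measure N"
  shows "(\<integral>\<^sup>+y. (\<integral>\<^sup>+z. h (z, y) \<partial>N) \<partial>L) = (\<integral>\<^sup>+z. (\<integral>\<^sup>+y. h (z, y) \<partial>L) \<partial>N)"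
proof -
  interpret L: finite_measure L using L by (simp add: fin_borel_measure_def)
  interpret N: finite_measure N using N by (simp add: fin_borel_measure_def)
  interpret pair_sigma_finite N L ..
  show ?thesis
    by (rule Fubini') (unfold case_prod_eta, rule borel_measurable_pair_separable[OF sep h fin_borel_measure_sets[OF N]
          fin_borel_measure_sets[OF L]])
qed

section \<open>The profile \<open>g\<close>\<close>

lemma G2_lower: "G2 G g c cD M0 \<alpha>0 \<Longrightarrow> ennreal (1/c) * g (dist x y) \<le> G x y"
  unfolding G2_def by blast

lemma G2_upper: "G2 G g c cD M0 \<alpha>0 \<Longrightarrow> G x y \<le> ennreal c * g (dist x y)"
  unfolding G2_def by blast

lemma G2_strict_antimono: "G2 G g c cD M0 \<alpha>0 \<Longrightarrow> 0 \<le> s \<Longrightarrow> s < t \<Longrightarrow> g t < g s"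
  unfolding G2_def monotone_on_def by auto

lemma G2_antimono: "G2 G g c cD M0 \<alpha>0 \<Longrightarrow> 0 \<le> s \<Longrightarrow> s \<le> t \<Longrightarrow> g t \<le> g s"
  using G2_strict_antimono[of G g c cD M0 \<alpha>0 s t] by (cases "s = t") auto

lemma G2_less_top:
  assumes "G2 G g c cD M0 \<alpha>0" "0 < t"
  shows "g t < top"
  using G2_strict_antimono[OF assms(1), of 0 t] assms(2) by (auto intro: less_le_trans[OF _ top_greatest])

lemma G2_enn2real_pos:
  assumes "G2 G g c cD M0 \<alpha>0" "0 < t"
  shows "0 < enn2real (g t)"
proof -
  have "0 < g (t + 1)" "g (t + 1) < g t"
    using assms G2_strict_antimono[OF assms(1), of t "t + 1"] unfolding G2_def by auto
  then show ?thesis using G2_less_top[OF assms] by (auto simp: enn2real_positive_iff)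
qed

lemma G2_eq_ennreal: "G2 G g c cD M0 \<alpha>0 \<Longrightarrow> 0 < t \<Longrightarrow> g t = ennreal (enn2real (g t))"
  using G2_less_top by (metis ennreal_enn2real less_top)

lemma G2_enn2real_antimono:
  assumes "G2 G g c cD M0 \<alpha>0" "0 < s" "s \<le> t"
  shows "enn2real (g t) \<le> enn2real (g s)"
  using assms by (intro enn2real_mono G2_antimono G2_less_top) auto

lemma G2_enn2real_doubling:
  assumes G2: "G2 G g c cD M0 \<alpha>0" and "0 < t"
  shows "enn2real (g (t/2)) \<le> cD * enn2real (g t)"
proof -
  have "g (t/2) \<le> ennreal cD * g t" "cD \<ge> 1" using assms unfolding G2_def by auto
  then have "enn2real (g (t/2)) \<le> enn2real (ennreal cD * g t)"
    using G2_less_top[OF assms] by (intro enn2real_mono) (auto simp: ennreal_mult_less_top)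
  then show ?thesis using \<open>cD \<ge> 1\<close> by (simp add: enn2real_mult)
qed

lemma G2_enn2real_power:
  assumes G2: "G2 G g c cD M0 \<alpha>0" and "0 < t"
  shows "M0 ^ n * enn2real (g t) \<le> enn2real (g (\<alpha>0 ^ n * t))"
proof (induction n)
  case (Suc n)
  have pos: "0 < \<alpha>0 ^ n * t" "0 < \<alpha>0 * (\<alpha>0 ^ n * t)" "M0 \<ge> 1"
    using assms unfolding G2_def by auto
  have "ennreal M0 * g (\<alpha>0 ^ n * t) \<le> g (\<alpha>0 * (\<alpha>0 ^ n * t))"
    using G2 pos unfolding G2_def by auto
  then have "enn2real (ennreal M0 * g (\<alpha>0 ^ n * t)) \<le> enn2real (g (\<alpha>0 ^ Suc n * t))"
    using G2_less_top[OF G2 pos(2)] by (intro enn2real_mono) (auto simp: mult.assoc)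
  then have "M0 * enn2real (g (\<alpha>0 ^ n * t)) \<le> enn2real (g (\<alpha>0 ^ Suc n * t))"
    using pos by (simp add: enn2real_mult)
  moreover have "M0 ^ Suc n * enn2real (g t) \<le> M0 * enn2real (g (\<alpha>0 ^ n * t))"
    using Suc pos by (simp add: mult.assoc mult_left_mono)
  ultimately show ?case by linarith
qed simp

lemma G2_enn2real_right_continuous:
  assumes G2: "G2 G g c cD M0 \<alpha>0" and "0 < a" "a < R" "0 \<le> \<theta>" "\<theta> < 1"
  obtains \<rho> where "a < \<rho>" "\<rho> \<le> R" "\<theta> * enn2real (g a) \<le> enn2real (g \<rho>)"
proof -
  have "(g \<longlongrightarrow> g a) (at a within {0..})"
    using G2 \<open>0 < a\<close> unfolding G2_def continuous_on_def by auto
  moreover have "ennreal (\<theta> * enn2real (g a)) < g a"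
    using G2_enn2real_pos[OF G2 \<open>0 < a\<close>] \<open>\<theta> < 1\<close>
    by (subst G2_eq_ennreal[OF G2 \<open>0 < a\<close>]) (intro ennreal_lessI; simp)
  ultimately have "\<forall>\<^sub>F t in at a within {0..}. ennreal (\<theta> * enn2real (g a)) < g t"
    by (rule order_tendstoD)
  then obtain d where d: "d > 0"
    "\<And>t. 0 \<le> t \<Longrightarrow> t \<noteq> a \<Longrightarrow> dist t a < d \<Longrightarrow> ennreal (\<theta> * enn2real (g a)) < g t"
    by (auto simp: eventually_at)
  define \<rho> where "\<rho> = min (a + d/2) R"
  have "a < \<rho>" "\<rho> \<le> R" using d \<open>a < R\<close> by (auto simp: \<rho>_def)
  moreover have "ennreal (\<theta> * enn2real (g a)) < ennreal (enn2real (g \<rho>))"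
    using d(2)[of \<rho>] \<open>a < \<rho>\<close> \<open>0 < a\<close> d(1) G2_eq_ennreal[OF G2, of \<rho>]
    by (auto simp: \<rho>_def dist_real_def)
  then have "\<theta> * enn2real (g a) \<le> enn2real (g \<rho>)"
    using \<open>0 \<le> \<theta>\<close> by (simp add: ennreal_less_iff)
  ultimately show thesis by (rule that)
qed

lemma G2_quasi_symmetric:
  assumes G2: "G2 G g c cD M0 \<alpha>0"
  shows "G y z \<le> ennreal (c^2) * G z y"
proof -
  have c: "c \<ge> 1" using G2 unfolding G2_def by auto
  have "G y z \<le> ennreal c * g (dist z y)"
    using G2_upper[OF G2] by (simp add: dist_commute)
  also have "\<dots> = ennreal c * ennreal c * (ennreal (1/c) * g (dist z y))"
    using c by (simp add: ennreal_mult[symmetric] mult.assoc[symmetric])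
  also have "\<dots> \<le> ennreal (c^2) * G z y"
    using c by (simp add: G2_lower[OF G2] ennreal_mult[symmetric] power2_eq_square mult_left_mono)
  finally show ?thesis .
qed

section \<open>Potentials\<close>

lemma pot_ge_measure_near:
  assumes G2: "G2 G g c cD M0 \<alpha>0" and \<nu>: "fin_borel_measure \<nu>" and A: "A \<in> sets borel"
    and "0 < \<rho>" and near: "\<And>z. z \<in> A \<Longrightarrow> dist x z \<le> \<rho>"
  shows "ennreal (enn2real (g \<rho>) / c * measure \<nu> A) \<le> pot G \<nu> x"
proof -
  have c: "c \<ge> 1" using G2 unfolding G2_def by auto
  have "ennreal (enn2real (g \<rho>) / c) * indicator A z \<le> G x z" for z
  proof (cases "z \<in> A")
    case True
    have "ennreal (enn2real (g \<rho>) / c) = ennreal (1/c) * g \<rho>"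
      using c by (subst (2) G2_eq_ennreal[OF G2 \<open>0 < \<rho>\<close>]) (simp add: ennreal_mult[symmetric])
    also have "\<dots> \<le> ennreal (1/c) * g (dist x z)"
      using True near by (intro mult_left_mono G2_antimono[OF G2]) auto
    also have "\<dots> \<le> G x z" by (rule G2_lower[OF G2])
    finally show ?thesis using True by simp
  qed simp
  then have "(\<integral>\<^sup>+z. ennreal (enn2real (g \<rho>) / c) * indicator A z \<partial>\<nu>) \<le> pot G \<nu> x"
    unfolding pot_def by (rule nn_integral_mono)
  then show ?thesis
    using A \<nu> c
    by (simp add: nn_integral_cmult_indicator fin_borel_measure_sets fin_borel_measure_emeasure
        ennreal_mult[symmetric])
qed

lemma pot_le_mass_far:
  assumes G2: "G2 G g c cD M0 \<alpha>0" and \<nu>: "fin_borel_measure \<nu>"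
    and B: "B \<in> sets borel" "emeasure \<nu> (- B) = 0"
    and "0 < s" and far: "\<And>z. z \<in> B \<Longrightarrow> s \<le> dist y z"
  shows "pot G \<nu> y \<le> ennreal (c * enn2real (g s) * mass \<nu>)"
proof -
  have c: "c \<ge> 1" using G2 unfolding G2_def by auto
  have "AE z in \<nu>. G y z \<le> ennreal c * g s"
    using AE_in_carrier[OF \<nu> B] proof eventually_elim
    case (elim z)
    have "G y z \<le> ennreal c * g (dist y z)" by (rule G2_upper[OF G2])
    also have "\<dots> \<le> ennreal c * g s"
      using far[OF elim] \<open>0 < s\<close> by (intro mult_left_mono G2_antimono[OF G2]) auto
    finally show ?case .
  qed
  then have "pot G \<nu> y \<le> (\<integral>\<^sup>+z. ennreal c * g s \<partial>\<nu>)"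
    unfolding pot_def by (rule nn_integral_mono_AE)
  also have "\<dots> = ennreal c * ennreal (enn2real (g s)) * ennreal (mass \<nu>)"
    using G2_eq_ennreal[OF G2 \<open>0 < s\<close>, symmetric]
    by (simp add: fin_borel_measure_space[OF \<nu>] fin_borel_measure_emeasure_UNIV[OF \<nu>])
  finally show ?thesis
    using c by (simp add: ennreal_mult mass_def)
qed

lemma nn_integral_pot_le_pot:
  fixes G :: "'a::metric_space \<Rightarrow> 'a \<Rightarrow> ennreal"
  assumes sep: "separable_space (euclidean :: 'a topology)"
    and Gmeas: "(\<lambda>(x, y). G x y) \<in> borel_measurable borel"
    and G2: "G2 G g c cD M0 \<alpha>0" and L: "fin_borel_measure L" and \<nu>: "fin_borel_measure \<nu>"
  shows "(\<integral>\<^sup>+y. pot G \<nu> y \<partial>L) \<le> ennreal (c^2) * (\<integral>\<^sup>+z. pot G L z \<partial>\<nu>)"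
proof -
  interpret L: finite_measure L using L by (simp add: fin_borel_measure_def)
  have Gpair: "(\<lambda>(z, y). G z y) \<in> borel_measurable (\<nu> \<Otimes>\<^sub>M L)"
    by (rule borel_measurable_pair_separable[OF sep Gmeas fin_borel_measure_sets[OF \<nu>]
          fin_borel_measure_sets[OF L]])
  have h: "(\<lambda>p. ennreal (c^2) * (\<lambda>(z, y). G z y) p) \<in> borel_measurable borel"
    by (intro borel_measurable_times_ennreal borel_measurable_const Gmeas)
  have "(\<integral>\<^sup>+y. pot G \<nu> y \<partial>L) \<le> (\<integral>\<^sup>+y. (\<integral>\<^sup>+z. ennreal (c^2) * G z y \<partial>\<nu>) \<partial>L)"
    unfolding pot_def by (intro nn_integral_mono G2_quasi_symmetric[OF G2])
  also have "\<dots> = (\<integral>\<^sup>+z. (\<integral>\<^sup>+y. ennreal (c^2) * G z y \<partial>L) \<partial>\<nu>)"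
    using nn_integral_swap_separable[OF sep h L \<nu>] by simp
  also have "\<dots> = (\<integral>\<^sup>+z. ennreal (c^2) * pot G L z \<partial>\<nu>)"
    unfolding pot_def using Gpair fin_borel_measure_space[OF \<nu>]
    by (intro nn_integral_cong nn_integral_cmult) (auto dest: measurable_compose_Pair1)
  also have "\<dots> = ennreal (c^2) * (\<integral>\<^sup>+z. pot G L z \<partial>\<nu>)"
    unfolding pot_def using Gpair by (intro nn_integral_cmult L.borel_measurable_nn_integral) simp
  finally show ?thesis .
qed

section \<open>The kernel \<open>\<mu>_x^U\<close>\<close>

lemma harmonic_kernel_fin_borel_measure:
  "harmonic_kernel mu \<Longrightarrow> open U \<Longrightarrow> fin_borel_measure (mu U x)"
  unfolding harmonic_kernel_def by simp

lemma harmonic_kernel_mass_le_1: "harmonic_kernel mu \<Longrightarrow> open U \<Longrightarrow> mass (mu U x) \<le> 1"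
  unfolding harmonic_kernel_def by simp

lemma harmonic_kernel_outside: "harmonic_kernel mu \<Longrightarrow> open U \<Longrightarrow> x \<notin> U \<Longrightarrow> mu U x = return borel x"
  unfolding harmonic_kernel_def by simp

lemma harmonic_kernel_compose:
  assumes "harmonic_kernel mu" "open U" "open V" "V \<subseteq> U" "E \<in> sets borel"
  shows "emeasure (mu U x) E = (\<integral>\<^sup>+ y. emeasure (mu U y) E \<partial>completion (mu V x))"
proof -
  have "\<forall>U V x. open U \<longrightarrow> open V \<longrightarrow> V \<subseteq> U \<longrightarrow>
      (\<forall>E \<in> sets borel. emeasure (mu U x) E = (\<integral>\<^sup>+ y. emeasure (mu U y) E \<partial>completion (mu V x)))"
    using assms(1) unfolding harmonic_kernel_def by (elim conjE)
  then show ?thesis using assms(2-) by blast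
qed

lemma mass_swept_on_set:
  assumes "harmonic_kernel mu" "closed A" "y \<in> A"
  shows "mass (swept mu A y) = 1"
proof -
  have "mu (- A) y = return borel y"
    using assms by (intro harmonic_kernel_outside) auto
  then show ?thesis by (simp add: swept_def mass_def measure_def emeasure_return)
qed

lemma harmonic_kernel_mass_le_through:
  assumes kern: "harmonic_kernel mu" and UV: "open U" "open V" "V \<subseteq> U"
    and W: "W \<in> sets borel" and s: "0 \<le> s" and outside: "\<And>y. y \<notin> W \<Longrightarrow> mass (mu U y) \<le> s"
  shows "mass (mu U x) \<le> measure (mu V x) W + s"
proof -
  have fU: "\<And>y. fin_borel_measure (mu U y)" and fV: "fin_borel_measure (mu V x)"
    using harmonic_kernel_fin_borel_measure[OF kern] UV by auto
  have pointwise: "emeasure (mu U y) UNIV \<le> indicator W y + ennreal s" for y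
    using outside[of y] harmonic_kernel_mass_le_1[OF kern UV(1), of y]
    by (cases "y \<in> W") (auto simp: fin_borel_measure_emeasure_UNIV[OF fU] add_increasing2 ennreal_leI)
  have "ennreal (mass (mu U x)) = (\<integral>\<^sup>+ y. emeasure (mu U y) UNIV \<partial>completion (mu V x))"
    using harmonic_kernel_compose[OF kern UV, of UNIV x] by (simp add: fin_borel_measure_emeasure_UNIV[OF fU])
  also have "\<dots> \<le> (\<integral>\<^sup>+ y. indicator W y + ennreal s \<partial>mu V x)"
    unfolding nn_integral_completion by (intro nn_integral_mono pointwise)
  also have "\<dots> = emeasure (mu V x) W + ennreal s * emeasure (mu V x) UNIV"
    using W fV
    by (subst nn_integral_add) (auto simp: fin_borel_measure_sets fin_borel_measure_space
        intro!: borel_measurable_indicator)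
  also have "\<dots> \<le> ennreal (measure (mu V x) W) + ennreal s * 1"
    using harmonic_kernel_mass_le_1[OF kern UV(2), of x]
    by (intro add_mono mult_left_mono)
      (auto simp: fin_borel_measure_emeasure[OF fV] fin_borel_measure_space[OF fV] mass_def)
  finally show ?thesis using s by (simp add: ennreal_plus[symmetric] del: ennreal_plus)
qed

lemma ball_in_relcomp_opens:
  assumes "ereal \<rho> < R0 X0 x"
  shows "ball x \<rho> \<in> relcomp_opens X0"
proof -
  obtain r where "\<rho> < r" "closure (ball x r) \<subseteq> X0"
    using assms unfolding R0_def less_SUP_iff by auto
  then show ?thesis
    unfolding relcomp_opens_def using closure_mono[OF subset_ball[of \<rho> r x]] by auto
qed

lemma G3_capacitary_measure:
  assumes G2: "G2 G g c cD M0 \<alpha>0" and G3: "G3 X0 G g c2"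
    and x: "x \<in> X0" and a: "0 < a" "ereal a < R0 X0 x" and \<theta>: "0 \<le> \<theta>" "\<theta> < 1"
  obtains L where "fin_borel_measure L" "emeasure L (- ball x a) = 0" "\<And>y. pot G L y \<le> 1"
    "\<theta> / (c2 * enn2real (g a)) < mass L"
proof -
  have c2: "c2 \<ge> 1" using G3 unfolding G3_def by auto
  have ga: "0 < enn2real (g a)" by (rule G2_enn2real_pos[OF G2 a(1)])
  have "ennreal (1/c2) * inverse (g a) \<le> cap G (ball x a)"
    using G3 x a unfolding G3_def by blast
  moreover have "ennreal (1/c2) * inverse (g a) = ennreal (1 / (c2 * enn2real (g a)))"
    using c2 ga by (subst G2_eq_ennreal[OF G2 a(1)]) (simp add: inverse_ennreal ennreal_mult[symmetric] field_simps)
  moreover have "ennreal (\<theta> / (c2 * enn2real (g a))) < ennreal (1 / (c2 * enn2real (g a)))"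
    using c2 ga \<theta> by (simp add: ennreal_less_iff divide_strict_right_mono)
  ultimately have "ennreal (\<theta> / (c2 * enn2real (g a))) < cap G (ball x a)" by simp
  then obtain L where L: "fin_borel_measure L" "emeasure L (- ball x a) = 0" "\<And>y. pot G L y \<le> 1"
    "ennreal (\<theta> / (c2 * enn2real (g a))) < emeasure L (space L)"
    unfolding cap_def less_SUP_iff by auto
  moreover have "\<theta> / (c2 * enn2real (g a)) < mass L"
    using L(4) \<theta>(1) c2 ga by (simp add: fin_borel_measure_space[OF L(1)] fin_borel_measure_emeasure_UNIV[OF L(1)]
        ennreal_less_iff)
  ultimately show thesis by (intro that)
qed

lemma annulus_potential_mass_lower_bound:
  fixes G :: "'a::metric_space \<Rightarrow> 'a \<Rightarrow> ennreal"
  assumes sep: "separable_space (euclidean :: 'a topology)"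
    and Gmeas: "(\<lambda>(x, y). G x y) \<in> borel_measurable borel"
    and G2: "G2 G g c cD M0 \<alpha>0" and G3: "G3 X0 G g c2"
    and x: "x \<in> X0" and ab: "0 < b" "b < a" "ereal a < R0 X0 x"
    and gab: "3 * c * c2 * enn2real (g a) \<le> enn2real (g b)"
    and \<nu>: "fin_borel_measure \<nu>" and pot_ge_1: "\<And>y. y \<in> ball x a - ball x b \<Longrightarrow> 1 \<le> pot G \<nu> y"
  shows "1 / (2 * c^2 * c2) < enn2real (g a) * mass \<nu>"
proof -
  have c: "c \<ge> 1" using G2 unfolding G2_def by auto
  have c2: "c2 \<ge> 1" using G3 unfolding G3_def by auto
  obtain L where L: "fin_borel_measure L" "emeasure L (- ball x a) = 0" "\<And>y. pot G L y \<le> 1"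
    and mass_L: "(5/6) / (c2 * enn2real (g a)) < mass L"
    using G3_capacitary_measure[OF G2 G3 x _ ab(3), of "5/6"] ab by auto
  interpret L: finite_measure L using L(1) by (simp add: fin_borel_measure_def)
  \<comment> \<open>Since \<open>GL(x) \<le> 1\<close>, at most \<open>c/g(b) \<le> 1/(3c\<^sub>2g(a))\<close> of the mass of \<open>L\<close> lies in \<open>U(x,b)\<close>.\<close>
  define Lb where "Lb = measure L (ball x b)"
  have "ennreal (enn2real (g b) / c * Lb) \<le> pot G L x"
    unfolding Lb_def by (rule pot_ge_measure_near[OF G2 L(1)]) (use ab in auto)
  then have "enn2real (g b) / c * Lb \<le> 1" using order_trans[OF _ L(3)[of x]] ennreal_le_1 by blast
  then have Lb_le: "Lb \<le> c / enn2real (g b)"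
    using c G2_enn2real_pos[OF G2 ab(1)] by (simp add: field_simps)
  have "measure L (ball x a - ball x b) = measure L (ball x a) - Lb"
    unfolding Lb_def using ab by (intro L.finite_measure_Diff) (auto simp: fin_borel_measure_sets[OF L(1)])
  also have "measure L (ball x a) = mass L"
    using L by (intro measure_eq_mass_if_carried) auto
  finally have annulus_eq: "measure L (ball x a - ball x b) = mass L - Lb" .
  have "ennreal (measure L (ball x a - ball x b)) = (\<integral>\<^sup>+y. indicator (ball x a - ball x b) y \<partial>L)"
    by (simp add: fin_borel_measure_emeasure[OF L(1), symmetric] fin_borel_measure_sets[OF L(1)])
  also have "\<dots> \<le> (\<integral>\<^sup>+y. pot G \<nu> y \<partial>L)"
    by (intro nn_integral_mono) (auto simp: indicator_def pot_ge_1)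
  also have "\<dots> \<le> ennreal (c^2) * (\<integral>\<^sup>+z. pot G L z \<partial>\<nu>)"
    by (rule nn_integral_pot_le_pot[OF sep Gmeas G2 L(1) \<nu>])
  also have "\<dots> \<le> ennreal (c^2) * (\<integral>\<^sup>+z. 1 \<partial>\<nu>)"
    by (intro mult_left_mono nn_integral_mono L(3)) simp
  also have "\<dots> = ennreal (c^2 * mass \<nu>)"
    by (simp add: fin_borel_measure_space[OF \<nu>] fin_borel_measure_emeasure_UNIV[OF \<nu>] ennreal_mult mass_def)
  finally have energy: "mass L - Lb \<le> c^2 * mass \<nu>"
    using annulus_eq by (simp add: ennreal_le_iff mass_def)
  have ga: "0 < enn2real (g a)" using G2_enn2real_pos[OF G2, of a] ab by simp
  have "c / enn2real (g b) \<le> 1 / (3 * c2 * enn2real (g a))"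
    using gab c c2 ga G2_enn2real_pos[OF G2 ab(1)] by (simp add: field_simps)
  with mass_L Lb_le energy have "(5/6) / (c2 * enn2real (g a)) - 1 / (3 * c2 * enn2real (g a)) < c^2 * mass \<nu>"
    by linarith
  then have "1 / (2 * c2 * enn2real (g a)) < c^2 * mass \<nu>"
    using c2 ga by (simp add: field_simps)
  then show ?thesis
    using c c2 ga by (simp add: field_simps)
qed

lemma pot_ge_mass_near:
  assumes G2: "G2 G g c cD M0 \<alpha>0" and \<nu>: "fin_borel_measure \<nu>"
    and B: "closed B" "emeasure \<nu> (- B) = 0" "B \<subseteq> ball x \<rho>" and "0 < \<rho>"
  shows "ennreal (enn2real (g \<rho>) / c * mass \<nu>) \<le> pot G \<nu> x"
proof -
  have "measure \<nu> (ball x \<rho>) = mass \<nu>"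
    using B \<nu> by (intro measure_eq_mass_if_carried) (auto simp: borel_closed)
  then show ?thesis
    using pot_ge_measure_near[OF G2 \<nu>, of "ball x \<rho>" \<rho> x] \<open>0 < \<rho>\<close> by auto
qed

lemma mass_swept_le_through_ball:
  assumes kern: "harmonic_kernel mu" and G2: "G2 G g c cD M0 \<alpha>0" and \<nu>: "fin_borel_measure \<nu>"
    and B: "closed B" "emeasure \<nu> (- B) = 0" "B \<subseteq> ball x \<rho>" and r: "0 < r" "\<rho> \<le> r/2"
    and F: "closed F" "ball x b \<subseteq> - F"
    and pot_lower: "\<And>y. ennreal (mass (swept mu F y)) \<le> pot G \<nu> y"
  shows "mass (swept mu F x) \<le> measure (mu (ball x b) x) (ball x r) + c * enn2real (g (r/2)) * mass \<nu>"
  unfolding swept_def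
proof (rule harmonic_kernel_mass_le_through[OF kern _ _ F(2)])
  have c: "c \<ge> 1" using G2 unfolding G2_def by auto
  then show "0 \<le> c * enn2real (g (r/2)) * mass \<nu>" by (simp add: mass_def)
  fix y assume "y \<notin> ball x r"
  then have far: "pot G \<nu> y \<le> ennreal (c * enn2real (g (r/2)) * mass \<nu>)"
    using B r by (intro pot_le_mass_far[OF G2 \<nu> _ B(2)]) (auto simp: borel_closed dist_commute, metric)
  show "mass (mu (- F) y) \<le> c * enn2real (g (r/2)) * mass \<nu>"
    using order_trans[OF pot_lower[of y] far] c by (simp add: swept_def mass_def ennreal_le_iff)
qed (use F in auto)

lemma G1E:
  assumes "G1 X0 mu G c1" "U \<in> relcomp_opens X0" "x \<in> U" "\<delta> > 0" "closed A" "A \<subseteq> U"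
  obtains B \<nu> where "closed B" "B \<subseteq> U" "fin_borel_measure \<nu>" "emeasure \<nu> (- B) = 0"
    "mass (swept mu B x) - \<delta> < c1 * mass (swept mu A x)"
    "\<And>y. ennreal (mass (swept mu A y)) \<le> pot G \<nu> y"
    "\<And>y. pot G \<nu> y \<le> ennreal (c1 * mass (swept mu B y))"
proof -
  have "\<forall>U \<in> relcomp_opens X0. \<forall>x \<in> U. \<forall>\<delta> > 0. \<forall>A. closed A \<longrightarrow> A \<subseteq> U \<longrightarrow>
      (\<exists>B \<nu>. closed B \<and> B \<subseteq> U \<and> A \<subseteq> interior B \<and> fin_borel_measure \<nu> \<and> emeasure \<nu> (- B) = 0 \<and>
        mass (swept mu B x) - \<delta> < c1 * mass (swept mu A x) \<and>
        (\<forall>y. ennreal (mass (swept mu A y)) \<le> pot G \<nu> y \<and> pot G \<nu> y \<le> ennreal (c1 * mass (swept mu B y))))"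
    using assms(1) unfolding G1_def by (rule conjunct2)
  from this[rule_format, OF assms(2-6)] show thesis
    using that by blast
qed

lemma balayage_estimate_arith:
  fixes c c1 c2 Q mB mF mW t :: real
  assumes Q: "1 / (2 * c^2 * c2) < Q" and mB: "3/4 * Q \<le> c * c1 * mB"
    and mW: "mF \<le> mW + t" and t: "t \<le> Q / (2 * c * c1^2)"
    and mF: "mB - 1 / (16 * c^3 * c1 * c2) < c1 * mF"
    and c: "c \<ge> 1" and c1: "c1 \<ge> 1" and c2: "c2 \<ge> 1"
  shows "1 / (16 * c^3 * c1^2 * c2) < mW"
proof -
  define e where "e = 1 / (16 * c^3 * c1 * c2)"
  define X where "X = Q / (c * c1)"
  have "3/4 * X \<le> mB" using mB c c1 by (simp add: X_def field_simps)
  moreover have "c1 * mF \<le> c1 * mW + 1/2 * X"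
    using mult_left_mono[OF order_trans[OF mW add_left_mono[OF t]], of c1] c1
    by (simp add: X_def field_simps power2_eq_square)
  moreover have "2 * e < 1/4 * X"
    using Q c c1 c2 by (simp add: X_def e_def field_simps power2_eq_square power3_eq_cube)
  ultimately have "e < c1 * mW" using mF unfolding e_def by linarith
  then show ?thesis using c c1 c2 by (simp add: e_def field_simps power2_eq_square)
qed

lemma harmonic_measure_ball_lower_bound_profile:
  fixes G :: "'a::metric_space \<Rightarrow> 'a \<Rightarrow> ennreal"
  assumes sep: "separable_space (euclidean :: 'a topology)"
    and Gmeas: "(\<lambda>(x, y). G x y) \<in> borel_measurable borel"
    and kern: "harmonic_kernel mu"
    and G1: "G1 X0 mu G c1" and G2: "G2 G g c cD M0 \<alpha>0" and G3: "G3 X0 G g c2"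
    and x: "x \<in> X0" and r: "ereal r < R0 X0 x"
    and radii: "0 < b" "b < a" "a < \<rho>" "\<rho> \<le> r/2"
    and g_\<rho>: "3/4 * enn2real (g a) \<le> enn2real (g \<rho>)"
    and g_b: "3 * c * c2 * enn2real (g a) \<le> enn2real (g b)"
    and g_r: "2 * c^2 * c1^2 * enn2real (g (r/2)) \<le> enn2real (g a)"
  shows "1 / (16 * c^3 * c1^2 * c2) < measure (mu (ball x b) x) (ball x r)"
proof -
  have c: "c \<ge> 1" using G2 unfolding G2_def by auto
  have c1: "c1 \<ge> 1" using G1 unfolding G1_def by auto
  have c2: "c2 \<ge> 1" using G3 unfolding G3_def by auto
  define F where "F = cball x a - ball x b"
  define \<delta> where "\<delta> = 1 / (16 * c^3 * c1 * c2)"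
  have "\<delta> > 0" using c c1 c2 by (simp add: \<delta>_def)
  have "ereal \<rho> < R0 X0 x" using r radii by (simp add: order.strict_trans1[of _ "ereal r"])
  then have U: "ball x \<rho> \<in> relcomp_opens X0" by (rule ball_in_relcomp_opens)
  have F: "closed F" "F \<subseteq> ball x \<rho>" using radii by (auto simp: F_def)
  obtain B \<nu> where B: "closed B" "B \<subseteq> ball x \<rho>" and \<nu>: "fin_borel_measure \<nu>" "emeasure \<nu> (- B) = 0"
    and swept_B: "mass (swept mu B x) - \<delta> < c1 * mass (swept mu F x)"
    and pot_lower: "\<And>y. ennreal (mass (swept mu F y)) \<le> pot G \<nu> y"
    and pot_upper: "\<And>y. pot G \<nu> y \<le> ennreal (c1 * mass (swept mu B y))"
    by (rule G1E[OF G1 U _ \<open>\<delta> > 0\<close> F]) (use radii in auto)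
  define N where "N = mass \<nu>"
  define Q where "Q = enn2real (g a) * N"
  have "1 / (2 * c^2 * c2) < Q"
    unfolding Q_def N_def
  proof (rule annulus_potential_mass_lower_bound[OF sep Gmeas G2 G3 x radii(1,2) _ g_b \<nu>(1)])
    show "ereal a < R0 X0 x" using r radii by (simp add: order.strict_trans1[of _ "ereal r"])
    show "1 \<le> pot G \<nu> y" if "y \<in> ball x a - ball x b" for y
      using pot_lower[of y] mass_swept_on_set[OF kern F(1), of y] that by (auto simp: F_def)
  qed
  moreover have "3/4 * Q \<le> c * c1 * mass (swept mu B x)"
  proof -
    have "ennreal (enn2real (g \<rho>) / c * N) \<le> ennreal (c1 * mass (swept mu B x))"
      unfolding N_def using pot_ge_mass_near[OF G2 \<nu>(1) B(1) \<nu>(2) B(2)] pot_upper[of x] radii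
      by (auto intro: order_trans)
    then have "enn2real (g \<rho>) / c * N \<le> c1 * mass (swept mu B x)"
      using c1 by (simp add: ennreal_le_iff mass_def)
    moreover have "3/4 * Q \<le> enn2real (g \<rho>) * N"
      unfolding Q_def N_def using mult_right_mono[OF g_\<rho>, of "mass \<nu>"] by (simp add: mass_def)
    ultimately show ?thesis using c by (simp add: field_simps)
  qed
  moreover have "mass (swept mu F x) \<le> measure (mu (ball x b) x) (ball x r) + c * enn2real (g (r/2)) * N"
    unfolding N_def using radii
    by (intro mass_swept_le_through_ball[OF kern G2 \<nu>(1) B(1) \<nu>(2) B(2) _ _ F(1) _ pot_lower])
      (auto simp: F_def)
  moreover have "c * enn2real (g (r/2)) * N \<le> Q / (2 * c * c1^2)"
  proof -
    have "2 * c^2 * c1^2 * enn2real (g (r/2)) * N \<le> Q"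
      using mult_right_mono[OF g_r, of N] by (simp add: Q_def N_def mass_def)
    then show ?thesis using c c1 by (simp add: field_simps power2_eq_square)
  qed
  ultimately show ?thesis
    using swept_B c c1 c2 unfolding \<delta>_def by (rule balayage_estimate_arith)
qed

lemma harmonic_measure_ball_lower_bound:
  fixes G :: "'a::metric_space \<Rightarrow> 'a \<Rightarrow> ennreal"
  assumes sep: "separable_space (euclidean :: 'a topology)"
    and Gmeas: "(\<lambda>(x, y). G x y) \<in> borel_measurable borel"
    and kern: "harmonic_kernel mu"
    and G1: "G1 X0 mu G c1" and G2: "G2 G g c cD M0 \<alpha>0" and G3: "G3 X0 G g c2"
    and Mk: "max (2 * cD^2 * c^2 * c1^2) (3 * c * c2) \<le> M0 ^ k"
    and \<alpha>k: "\<alpha>0 ^ k < 1/4" and \<alpha>: "0 < \<alpha>" "\<alpha> \<le> \<alpha>0 ^ k"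
    and x: "x \<in> X0" and r: "0 < r" "ereal r < R0 X0 x"
  shows "1 / (16 * c^3 * c1^2 * c2) < measure (mu (ball x (\<alpha>^2 * r)) x) (ball x r)"
proof -
  have cD: "cD \<ge> 1" and c: "c \<ge> 1" using G2 unfolding G2_def by auto
  define a where "a = \<alpha> * r"
  have radii: "0 < \<alpha>^2 * r" "\<alpha>^2 * r < a" "a < r/2"
    using \<alpha> \<alpha>k r by (auto simp: a_def power2_eq_square)
  have scale: "M0 ^ k * enn2real (g s) \<le> enn2real (g t)" if "0 < t" "t \<le> \<alpha> * s" for s t
  proof -
    have "0 < \<alpha> * s" using that by linarith
    then have "0 < s" using \<alpha> by (simp add: zero_less_mult_iff)
    have "t \<le> \<alpha>0 ^ k * s" using that \<alpha> \<open>0 < s\<close> by (meson mult_right_mono less_imp_le order.trans)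
    then show ?thesis
      using G2_enn2real_power[OF G2 \<open>0 < s\<close>, of k] G2_enn2real_antimono[OF G2 \<open>0 < t\<close>] by fastforce
  qed
  have "3 * c * c2 * enn2real (g a) \<le> enn2real (g (\<alpha>^2 * r))"
    using scale[of "\<alpha>^2 * r" a] radii Mk G2_enn2real_pos[OF G2, of a]
    by (smt (verit) a_def max.bounded_iff mult_right_mono power2_eq_square mult.assoc)
  moreover have "2 * c^2 * c1^2 * enn2real (g (r/2)) \<le> enn2real (g a)"
  proof -
    have cD_le: "cD \<le> cD^2" using cD by (simp add: power2_eq_square)
    have "2 * c^2 * c1^2 * enn2real (g (r/2)) \<le> 2 * c^2 * c1^2 * (cD * enn2real (g r))"
      using G2_enn2real_doubling[OF G2 r(1)] by (intro mult_left_mono) auto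
    also have "\<dots> \<le> 2 * cD^2 * c^2 * c1^2 * enn2real (g r)"
      using mult_right_mono[OF cD_le, of "2 * c^2 * c1^2 * enn2real (g r)"] by (simp add: algebra_simps)
    also have "\<dots> \<le> M0 ^ k * enn2real (g r)"
      using Mk G2_enn2real_pos[OF G2 r(1)] by (intro mult_right_mono) auto
    also have "\<dots> \<le> enn2real (g a)" using scale[of a r] radii by (simp add: a_def)
    finally show ?thesis .
  qed
  moreover obtain \<rho> where "a < \<rho>" "\<rho> \<le> r/2" "3/4 * enn2real (g a) \<le> enn2real (g \<rho>)"
    using G2_enn2real_right_continuous[OF G2, of a "r/2" "3/4"] radii by auto
  ultimately show ?thesis
    using harmonic_measure_ball_lower_bound_profile[OF sep Gmeas kern G1 G2 G3 x r(2) radii(1,2)] by blast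
qed

theorem proposition4p11:
  fixes X0 :: "'a::metric_space set"
    and mu :: "'a set \<Rightarrow> 'a \<Rightarrow> 'a measure"
    and G :: "'a \<Rightarrow> 'a \<Rightarrow> ennreal"
    and g :: "real \<Rightarrow> ennreal"
    and c cD M0 \<alpha>0 c1 c2 \<alpha> :: real
    and k :: nat
  assumes sep: "separable_space (euclidean :: 'a topology)"
    and X0: "open X0"
    and kern: "harmonic_kernel mu"
    and Gmeas: "(\<lambda>(x, y). G x y) \<in> borel_measurable borel"
    and Gpos: "\<forall>x y. G x y > 0"
    and hG1: "G1 X0 mu G c1"
    and hG2: "G2 G g c cD M0 \<alpha>0"
    and hG3: "G3 X0 G g c2"
    and Mk: "max (2 * cD^2 * c^2 * c1^2) (3 * c * c2) \<le> M0 ^ k"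
    and \<alpha>k: "\<alpha>0 ^ k < 1/4"
    and \<alpha>: "0 < \<alpha>" "\<alpha> \<le> \<alpha>0 ^ k"
  shows "\<exists>\<delta>0 > 0. \<forall>x \<in> X0. \<forall>r. 0 < r \<longrightarrow> ereal r < R0 X0 x \<longrightarrow>
           measure (mu (ball x (\<alpha>^2 * r)) x) (ball x r) > \<delta>0"
proof -
  have "0 < 1 / (16 * c^3 * c1^2 * c2)"
    using hG1 hG2 hG3 unfolding G1_def G2_def G3_def by simp
  then show ?thesis
    using harmonic_measure_ball_lower_bound[OF sep Gmeas kern hG1 hG2 hG3 Mk \<alpha>k \<alpha>] by blast
qed

end
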